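(* Let $P$ be a monotone irreducible positive recurrent stochastic kernel on $\mathbb{N}=\{1,2,\dots\}$ with stationary distribution $\pi$. Let $X=(X_n)_{n\ge0}$ be the Markov chain with kernel $P$ and, for $N\ge1$, $\tau_{(N)}=\inf\{n\ge 0: X_n\ge N\}$. Then $$\forall\, y,z\in\mathbb{N}:\quad \lim_{n,N\to\infty}\frac{\mathbb{P}_y(\tau_{(N)}>n)}{\mathbb{P}_z(\tau_{(N)}>n)}=1,$$ where the limit is taken jointly as both $n\to\infty$ and $N\to\infty$.
   Context: A stochastic kernel $P$ on $\mathbb{N}$ is monotone if for every $y\in\mathbb{N}$ the map $x\mapsto\sum_{z\le y}P(x,z)$ is decreasing in $x$. $\mathbb{P}_x$ denotes the law of the chain started at $x$. The stationary distribution $\pi$ satisfies $\pi(i)>0$, $\sum_i\pi(i)=1$, $\pi' P=\pi'$. *)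

theory Defs
  imports "HOL-Analysis.Analysis"
begin

text \<open>State space is the positive naturals {1,2,...}, modelled as the subset
  {1..} of type nat.  A kernel is a function P :: nat => nat => real; only its
  values on {1..} x {1..} matter.\<close>

definition stochastic_kernel :: "(nat \<Rightarrow> nat \<Rightarrow> real) \<Rightarrow> bool" where
  "stochastic_kernel P \<longleftrightarrow>
     (\<forall>x\<ge>1. \<forall>z\<ge>1. P x z \<ge> 0) \<and> (\<forall>x\<ge>1. (P x has_sum 1) {1..})"

definition monotone_kernel :: "(nat \<Rightarrow> nat \<Rightarrow> real) \<Rightarrow> bool" where
  "monotone_kernel P \<longleftrightarrow>
     (\<forall>y\<ge>1. \<forall>x x'. 1 \<le> x \<longrightarrow> x \<le> x' \<longrightarrow> (\<Sum>z\<in>{1..y}. P x' z) \<le> (\<Sum>z\<in>{1..y}. P x z))"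

fun kpow :: "(nat \<Rightarrow> nat \<Rightarrow> real) \<Rightarrow> nat \<Rightarrow> nat \<Rightarrow> nat \<Rightarrow> real" where
  "kpow P 0 x y = (if x = y then 1 else 0)"
| "kpow P (Suc n) x y = infsum (\<lambda>z. P x z * kpow P n z y) {1..}"

definition irreducible_kernel :: "(nat \<Rightarrow> nat \<Rightarrow> real) \<Rightarrow> bool" where
  "irreducible_kernel P \<longleftrightarrow> (\<forall>x\<ge>1. \<forall>y\<ge>1. \<exists>n. kpow P n x y > 0)"

fun first_pass :: "(nat \<Rightarrow> nat \<Rightarrow> real) \<Rightarrow> nat \<Rightarrow> nat \<Rightarrow> nat \<Rightarrow> real" where
  "first_pass P 0 x y = 0"
| "first_pass P (Suc 0) x y = P x y"
| "first_pass P (Suc (Suc n)) x y = infsum (\<lambda>z. P x z * first_pass P (Suc n) z y) ({1..} - {y})"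

text \<open>Positive recurrence: every state x is recurrent (P_x(T_x < \<infinity>) = 1) and has
  finite mean return time E_x[T_x] < \<infinity>, where T_x = inf{n \<ge> 1 : X_n = x}.\<close>
definition positive_recurrent :: "(nat \<Rightarrow> nat \<Rightarrow> real) \<Rightarrow> bool" where
  "positive_recurrent P \<longleftrightarrow>
     (\<forall>x\<ge>1. ((\<lambda>n. first_pass P n x x) has_sum 1) UNIV \<and>
             (\<lambda>n. real n * first_pass P n x x) summable_on UNIV)"

definition stationary_distribution :: "(nat \<Rightarrow> nat \<Rightarrow> real) \<Rightarrow> (nat \<Rightarrow> real) \<Rightarrow> bool" where
  "stationary_distribution P \<pi> \<longleftrightarrow>
     (\<forall>i\<ge>1. \<pi> i > 0) \<and> (\<pi> has_sum 1) {1..} \<and>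
     (\<forall>j\<ge>1. ((\<lambda>i. \<pi> i * P i j) has_sum \<pi> j) {1..})"

text \<open>surv P N n y = P_y(\<tau>_(N) > n) where \<tau>_(N) = inf{n \<ge> 0 : X_n \<ge> N},
  i.e. the probability that X_0, ..., X_n all lie in {1..<N}.\<close>
fun surv :: "(nat \<Rightarrow> nat \<Rightarrow> real) \<Rightarrow> nat \<Rightarrow> nat \<Rightarrow> nat \<Rightarrow> real" where
  "surv P N 0 y = (if y < N then 1 else 0)"
| "surv P N (Suc n) y = (if y < N then (\<Sum>z\<in>{1..<N}. P y z * surv P N n z) else 0)"

end

theory Submission
  imports Defs
begin

text \<open>By monotonicity of the kernel, \<open>y \<mapsto> \<P>\<^sub>y(\<tau>\<^sub>N > n)\<close> is decreasing, so for
  \<open>b < a\<close> the ratio \<open>\<P>\<^sub>a(\<tau>\<^sub>N > n) / \<P>\<^sub>b(\<tau>\<^sub>N > n)\<close> is at most 1. Conversely, started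
  at \<open>a\<close> the chain enters \<open>{1..b}\<close> within \<open>K\<close> steps, without reaching \<open>N\<close> first, with
  probability close to 1 once \<open>K\<close> and \<open>N\<close> are large; from the entrance point it survives
  at least as well as from \<open>b\<close>, so the ratio is at least \<open>1 - \<delta>\<close> for \<open>n \<ge> K\<close>.
  That \<open>{1..b}\<close> is entered almost surely comes from the stationary distribution: the
  mass \<open>\<Sum>\<^sub>x \<pi>(x) \<P>\<^sub>x(X\<^sub>0, \<dots>, X\<^sub>k > b)\<close> decreases in \<open>k\<close> by at least
  \<open>\<pi>(x) \<P>\<^sub>x(X\<^sub>1, \<dots>, X\<^sub>k\<^sub>+\<^sub>1 > b)\<close> for every \<open>x \<le> b\<close>, so these probabilities are summable
  in \<open>k\<close>, and irreducibility propagates their convergence to 0 to every starting state.\<close>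

definition kernel_apply :: "(nat \<Rightarrow> nat \<Rightarrow> real) \<Rightarrow> (nat \<Rightarrow> real) \<Rightarrow> nat \<Rightarrow> real" where
  "kernel_apply P f x = (\<Sum>\<^sub>\<infinity>w\<in>{1..}. P x w * f w)"

fun avoid_below :: "(nat \<Rightarrow> nat \<Rightarrow> real) \<Rightarrow> nat \<Rightarrow> nat \<Rightarrow> nat \<Rightarrow> real" where
  "avoid_below P b 0 x = (if x \<le> b then 0 else 1)"
| "avoid_below P b (Suc k) x = (if x \<le> b then 0 else kernel_apply P (avoid_below P b k) x)"

fun hit_below :: "(nat \<Rightarrow> nat \<Rightarrow> real) \<Rightarrow> nat \<Rightarrow> nat \<Rightarrow> nat \<Rightarrow> nat \<Rightarrow> real" where
  "hit_below P b N 0 x = (if x \<le> b then 1 else 0)"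
| "hit_below P b N (Suc k) x =
     (if x \<le> b then 1 else if x < N then (\<Sum>w\<in>{1..<N}. P x w * hit_below P b N k w) else 0)"

lemma has_sum_sum_fun:
  fixes g :: "'i \<Rightarrow> 'a \<Rightarrow> 'b::topological_comm_monoid_add"
  assumes "finite I" and "\<And>i. i \<in> I \<Longrightarrow> (g i has_sum s i) A"
  shows "((\<lambda>w. \<Sum>i\<in>I. g i w) has_sum (\<Sum>i\<in>I. s i)) A"
  using assms by (induction I rule: finite_induct) (auto intro: has_sum_add)

lemma stochastic_dominance_sum_diff_ge:
  fixes p q g :: "nat \<Rightarrow> real"
  assumes "\<And>j. j \<le> m \<Longrightarrow> (\<Sum>z\<in>{1..j}. q z) \<le> (\<Sum>z\<in>{1..j}. p z)"
    and "\<And>i j. 1 \<le> i \<Longrightarrow> i \<le> j \<Longrightarrow> j \<le> m \<Longrightarrow> g j \<le> g i"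
    and "\<And>j. 1 \<le> j \<Longrightarrow> j \<le> m \<Longrightarrow> 0 \<le> g j"
  shows "((\<Sum>z\<in>{1..m}. p z) - (\<Sum>z\<in>{1..m}. q z)) * g m \<le> (\<Sum>z\<in>{1..m}. (p z - q z) * g z)"
  using assms
proof (induction m)
  case 0
  then show ?case by simp
next
  case (Suc m)
  define D where "D j = (\<Sum>z\<in>{1..j}. p z) - (\<Sum>z\<in>{1..j}. q z)" for j
  have "D m * g (Suc m) \<le> D m * g m"
  proof (cases "m = 0")
    case False
    then show ?thesis
      using Suc.prems(1)[of m] Suc.prems(2)[of m "Suc m"] by (intro mult_left_mono) (auto simp: D_def)
  qed (simp add: D_def)
  moreover have "D m * g m \<le> (\<Sum>z\<in>{1..m}. (p z - q z) * g z)"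
    using Suc.IH Suc.prems unfolding D_def by auto
  ultimately show ?case by (simp add: D_def algebra_simps)
qed

lemma stochastic_dominance_sum_le:
  fixes p q g :: "nat \<Rightarrow> real"
  assumes "\<And>j. j \<le> m \<Longrightarrow> (\<Sum>z\<in>{1..j}. q z) \<le> (\<Sum>z\<in>{1..j}. p z)"
    and "\<And>i j. 1 \<le> i \<Longrightarrow> i \<le> j \<Longrightarrow> j \<le> m \<Longrightarrow> g j \<le> g i"
    and "\<And>j. 1 \<le> j \<Longrightarrow> j \<le> m \<Longrightarrow> 0 \<le> g j"
  shows "(\<Sum>z\<in>{1..m}. q z * g z) \<le> (\<Sum>z\<in>{1..m}. p z * g z)"
proof -
  have "0 \<le> ((\<Sum>z\<in>{1..m}. p z) - (\<Sum>z\<in>{1..m}. q z)) * g m"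
    using assms by (cases "m = 0") (auto intro!: mult_nonneg_nonneg)
  also have "\<dots> \<le> (\<Sum>z\<in>{1..m}. (p z - q z) * g z)"
    by (rule stochastic_dominance_sum_diff_ge[OF assms])
  finally show ?thesis by (simp add: algebra_simps sum_subtractf)
qed

locale stoch_kernel =
  fixes P :: "nat \<Rightarrow> nat \<Rightarrow> real"
  assumes P_nonneg: "\<And>x z. 1 \<le> x \<Longrightarrow> 1 \<le> z \<Longrightarrow> 0 \<le> P x z"
    and P_has_sum: "\<And>x. 1 \<le> x \<Longrightarrow> (P x has_sum 1) {1..}"
begin

lemma sum_P_le_1:
  assumes "1 \<le> x"
  shows "(\<Sum>z\<in>{1..<M}. P x z) \<le> 1"
  by (rule finite_sum_le_has_sum[OF P_has_sum]) (use assms P_nonneg in auto)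

context
  fixes f :: "nat \<Rightarrow> real" and x :: nat
  assumes x: "1 \<le> x" and f: "\<And>w. 1 \<le> w \<Longrightarrow> 0 \<le> f w \<and> f w \<le> 1"
begin

lemma kernel_apply_summable: "(\<lambda>w. P x w * f w) summable_on {1..}"
  by (rule summable_on_comparison_test[OF has_sum_imp_summable[OF P_has_sum[OF x]]])
     (use x f P_nonneg in \<open>auto intro: mult_left_le\<close>)

lemma kernel_apply_bounds: "0 \<le> kernel_apply P f x \<and> kernel_apply P f x \<le> 1"
proof
  show "0 \<le> kernel_apply P f x"
    unfolding kernel_apply_def using x f P_nonneg by (intro infsum_nonneg) auto
  have "kernel_apply P f x \<le> (\<Sum>\<^sub>\<infinity>w\<in>{1..}. P x w)"
    unfolding kernel_apply_def
    using x f P_nonneg kernel_apply_summable has_sum_imp_summable[OF P_has_sum[OF x]]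
    by (intro infsum_mono) (auto intro: mult_left_le)
  also have "\<dots> = 1"
    using P_has_sum[OF x] by (rule infsumI)
  finally show "kernel_apply P f x \<le> 1" .
qed

lemma P_mult_le_kernel_apply: "1 \<le> w \<Longrightarrow> P x w * f w \<le> kernel_apply P f x"
  unfolding kernel_apply_def
  using finite_sum_le_infsum[OF kernel_apply_summable, of "{w}"] x f P_nonneg by auto

lemma kernel_apply_one_minus: "kernel_apply P (\<lambda>w. 1 - f w) x = 1 - kernel_apply P f x"
proof -
  have "((\<lambda>w. P x w * f w) has_sum kernel_apply P f x) {1..}"
    unfolding kernel_apply_def by (rule has_sum_infsum[OF kernel_apply_summable])
  from has_sum_add[OF P_has_sum[OF x] has_sum_cmult_right[OF this, of "-1"]]
  have "((\<lambda>w. P x w * (1 - f w)) has_sum (1 - kernel_apply P f x)) {1..}"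
    by (simp add: algebra_simps)
  then show ?thesis
    unfolding kernel_apply_def by (rule infsumI)
qed

lemma kernel_apply_finite_approx:
  assumes "0 < \<epsilon>"
  obtains M where "kernel_apply P f x - 2 * \<epsilon> \<le> (\<Sum>w\<in>{1..<M}. P x w * (f w - \<epsilon>))"
proof -
  obtain F where F: "finite F" "F \<subseteq> {1..}" "dist (\<Sum>w\<in>F. P x w * f w) (kernel_apply P f x) \<le> \<epsilon>"
    using has_sum_finite_approximation[OF has_sum_infsum[OF kernel_apply_summable] assms]
    unfolding kernel_apply_def by blast
  obtain M where "F \<subseteq> {..<M}"
    using F(1) finite_nat_bounded by blast
  with F(2) have "(\<Sum>w\<in>F. P x w * f w) \<le> (\<Sum>w\<in>{1..<M}. P x w * f w)"
    using x f P_nonneg by (intro sum_mono2) auto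
  moreover have "kernel_apply P f x - \<epsilon> \<le> (\<Sum>w\<in>F. P x w * f w)"
    using F(3) unfolding dist_real_def abs_le_iff by linarith
  moreover have "\<epsilon> * (\<Sum>w\<in>{1..<M}. P x w) \<le> \<epsilon>"
    using sum_P_le_1[OF x] assms by (intro mult_left_le) auto
  moreover have "(\<Sum>w\<in>{1..<M}. P x w * (f w - \<epsilon>))
      = (\<Sum>w\<in>{1..<M}. P x w * f w) - \<epsilon> * (\<Sum>w\<in>{1..<M}. P x w)"
    by (simp add: right_diff_distrib sum_subtractf sum_distrib_left mult.commute)
  ultimately show ?thesis
    by (intro that[of M]) linarith
qed

end

lemma irreducible_invariant:
  assumes "irreducible_kernel P"
    and step: "\<And>x w. 1 \<le> x \<Longrightarrow> 1 \<le> w \<Longrightarrow> 0 < P x w \<Longrightarrow> Q x \<Longrightarrow> Q w"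
    and "1 \<le> x" "1 \<le> z" "Q x"
  shows "Q z"
proof -
  obtain n where "kpow P n x z \<noteq> 0"
    using assms unfolding irreducible_kernel_def by force
  then show ?thesis
    using \<open>1 \<le> x\<close> \<open>Q x\<close>
  proof (induction n arbitrary: x)
    case 0
    then show ?case by (simp split: if_splits)
  next
    case (Suc n)
    have "\<exists>w\<in>{1..}. P x w * kpow P n w z \<noteq> 0"
      using Suc.prems(1) infsum_0[of "{1..}" "\<lambda>w. P x w * kpow P n w z"] by auto
    then obtain w where w: "1 \<le> w" "P x w \<noteq> 0" "kpow P n w z \<noteq> 0"
      by auto
    moreover have "0 < P x w"
      using w P_nonneg[of x w] Suc.prems by simp
    ultimately show ?case
      using Suc step by blast
  qed
qed

lemma surv_nonneg: "1 \<le> y \<Longrightarrow> 0 \<le> surv P N n y"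
  by (induction n arbitrary: y) (auto intro!: sum_nonneg mult_nonneg_nonneg P_nonneg)

lemma surv_Suc_le: "1 \<le> y \<Longrightarrow> surv P N (Suc n) y \<le> surv P N n y"
proof (induction n arbitrary: y)
  case 0
  then show ?case using sum_P_le_1[of y N] by auto
next
  case (Suc n)
  have "(\<Sum>z\<in>{1..<N}. P y z * surv P N (Suc n) z) \<le> (\<Sum>z\<in>{1..<N}. P y z * surv P N n z)"
    using Suc by (auto intro!: sum_mono mult_left_mono P_nonneg surv_nonneg simp del: surv.simps(2))
  then show ?case by (subst (1 2) surv.simps(2)) simp
qed

lemma avoid_below_bounds: "0 \<le> avoid_below P b k x \<and> avoid_below P b k x \<le> 1"
proof (induction k arbitrary: x)
  case (Suc k)
  then show ?case
    using kernel_apply_bounds[of x "avoid_below P b k"] by (cases "x \<le> b") auto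
qed simp

lemma kernel_apply_avoid_below_bounds:
  "1 \<le> x \<Longrightarrow> 0 \<le> kernel_apply P (avoid_below P b k) x \<and> kernel_apply P (avoid_below P b k) x \<le> 1"
  using kernel_apply_bounds[of x "avoid_below P b k"] avoid_below_bounds by blast

lemma avoid_below_tendsto_zero_of_edge:
  assumes "1 \<le> x" "1 \<le> w" "0 < P x w"
    and "(\<lambda>k. kernel_apply P (avoid_below P b k) x) \<longlonglongrightarrow> 0"
  shows "(\<lambda>k. avoid_below P b k w) \<longlonglongrightarrow> 0"
proof -
  have "avoid_below P b k w \<le> kernel_apply P (avoid_below P b k) x / P x w" for k
    using P_mult_le_kernel_apply[where x = x and f = "avoid_below P b k" and w = w]
      avoid_below_bounds assms
    by (simp add: pos_le_divide_eq mult.commute)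
  then have upper: "\<forall>\<^sub>F k in sequentially.
      avoid_below P b k w \<le> kernel_apply P (avoid_below P b k) x / P x w"
    by simp
  have lower: "\<forall>\<^sub>F k in sequentially. 0 \<le> avoid_below P b k w"
    using avoid_below_bounds by simp
  show ?thesis
    using tendsto_divide_zero[OF assms(4), of "P x w"]
    by (rule tendsto_sandwich[OF lower upper tendsto_const])
qed

lemma hit_below_nonneg: "0 \<le> hit_below P b N k x"
  by (induction k arbitrary: x) (auto intro!: sum_nonneg mult_nonneg_nonneg P_nonneg)

lemma hit_below_approx:
  assumes "1 \<le> x" "0 < \<delta>"
  shows "\<forall>\<^sub>F N in sequentially. 1 - avoid_below P b k x - \<delta> \<le> hit_below P b N k x"
  using assms
proof (induction k arbitrary: x \<delta>)
  case 0
  then show ?case by auto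
next
  case (Suc k)
  show ?case
  proof (cases "x \<le> b")
    case True
    then show ?thesis using Suc.prems by simp
  next
    case False
    let ?g = "\<lambda>w. 1 - avoid_below P b k w"
    have g: "0 \<le> ?g w \<and> ?g w \<le> 1" for w
      using avoid_below_bounds[of b k w] by simp
    obtain M where approx: "kernel_apply P ?g x - 2 * (\<delta>/2) \<le> (\<Sum>w\<in>{1..<M}. P x w * (?g w - \<delta>/2))"
      by (rule kernel_apply_finite_approx[where f = ?g and x = x and \<epsilon> = "\<delta>/2"])
         (use Suc.prems g in auto)
    have "\<forall>\<^sub>F N in sequentially. \<forall>w\<in>{1..<M}. ?g w - \<delta>/2 \<le> hit_below P b N k w"
      by (rule eventually_ball_finite) (use Suc.IH Suc.prems in auto)
    moreover have "\<forall>\<^sub>F N in sequentially. max M (Suc x) \<le> N"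
      by (rule eventually_ge_at_top)
    ultimately show ?thesis
    proof eventually_elim
      case (elim N)
      have "1 - avoid_below P b (Suc k) x - \<delta> = kernel_apply P ?g x - \<delta>"
        using False Suc.prems kernel_apply_one_minus[of x "avoid_below P b k"] avoid_below_bounds
        by simp
      also have "\<dots> \<le> (\<Sum>w\<in>{1..<M}. P x w * (?g w - \<delta>/2))"
        using approx by simp
      also have "\<dots> \<le> (\<Sum>w\<in>{1..<M}. P x w * hit_below P b N k w)"
        using elim(1) Suc.prems P_nonneg by (intro sum_mono mult_left_mono) auto
      also have "\<dots> \<le> (\<Sum>w\<in>{1..<N}. P x w * hit_below P b N k w)"
        using elim(2) Suc.prems P_nonneg hit_below_nonneg by (intro sum_mono2) auto
      also have "\<dots> = hit_below P b N (Suc k) x"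
        using False elim(2) by simp
      finally show ?case .
    qed
  qed
qed

end

locale monotone_stoch_kernel = stoch_kernel +
  assumes P_mono:
    "\<And>y x x'. 1 \<le> y \<Longrightarrow> 1 \<le> x \<Longrightarrow> x \<le> x' \<Longrightarrow> (\<Sum>z\<in>{1..y}. P x' z) \<le> (\<Sum>z\<in>{1..y}. P x z)"
begin

lemma surv_antimono:
  assumes "1 \<le> x" "x \<le> x'"
  shows "surv P N n x' \<le> surv P N n x"
  using assms
proof (induction n arbitrary: x x')
  case 0
  then show ?case by auto
next
  case (Suc n)
  show ?case
  proof (cases "x' < N")
    case False
    then show ?thesis using surv_nonneg[of x N "Suc n"] Suc.prems by simp
  next
    case True
    then have N: "{1..<N} = {1..N - 1}" by auto
    have "(\<Sum>z\<in>{1..<N}. P x' z * surv P N n z) \<le> (\<Sum>z\<in>{1..<N}. P x z * surv P N n z)"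
      unfolding N
    proof (rule stochastic_dominance_sum_le)
      fix j
      show "(\<Sum>z\<in>{1..j}. P x' z) \<le> (\<Sum>z\<in>{1..j}. P x z)"
        using P_mono[of j x x'] Suc.prems by (cases "j = 0") auto
    qed (use Suc surv_nonneg in auto)
    then show ?thesis
      using True Suc.prems by simp
  qed
qed

lemma hit_below_mult_surv_le:
  assumes "1 \<le> b"
  shows "k \<le> n \<Longrightarrow> 1 \<le> x \<Longrightarrow> hit_below P b N k x * surv P N n b \<le> surv P N n x"
proof (induction k arbitrary: n x)
  case 0
  then show ?case using surv_antimono[of x b N n] surv_nonneg[of x N n] by auto
next
  case (Suc k)
  then obtain m where n: "n = Suc m" and km: "k \<le> m" by (cases n) auto
  consider "x \<le> b" | "b < x" "N \<le> x" | "b < x" "x < N" by linarith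
  then show ?case
  proof cases
    case 1
    then show ?thesis using surv_antimono[of x b N n] Suc.prems by auto
  next
    case 2
    then show ?thesis using surv_nonneg[of x N n] Suc.prems by auto
  next
    case 3
    have "hit_below P b N (Suc k) x * surv P N n b \<le> hit_below P b N (Suc k) x * surv P N m b"
      unfolding n by (rule mult_left_mono[OF surv_Suc_le[OF assms] hit_below_nonneg])
    also have "\<dots> = (\<Sum>w\<in>{1..<N}. P x w * (hit_below P b N k w * surv P N m b))"
      using 3 by (simp add: sum_distrib_right mult.assoc)
    also have "\<dots> \<le> (\<Sum>w\<in>{1..<N}. P x w * surv P N m w)"
      using Suc.IH[OF km] Suc.prems by (intro sum_mono mult_left_mono P_nonneg) auto
    also have "\<dots> = surv P N n x"
      using n 3 by simp
    finally show ?thesis .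
  qed
qed

lemma surv_ge_of_avoid_below_tendsto_zero:
  assumes "1 \<le> b" "b < a" and avoid: "(\<lambda>k. avoid_below P b k a) \<longlonglongrightarrow> 0" and "0 < \<delta>"
  shows "\<forall>\<^sub>F (n, N) in sequentially \<times>\<^sub>F sequentially. (1 - \<delta>) * surv P N n b \<le> surv P N n a"
proof -
  obtain K where K: "avoid_below P b K a < \<delta>/2"
    using order_tendstoD(2)[OF avoid, of "\<delta>/2"] \<open>0 < \<delta>\<close> by (auto simp: eventually_sequentially)
  obtain N0 where N0: "\<And>N. N0 \<le> N \<Longrightarrow> 1 - avoid_below P b K a - \<delta>/2 \<le> hit_below P b N K a"
    using hit_below_approx[of a "\<delta>/2" b K] assms by (auto simp: eventually_sequentially)
  have "(1 - \<delta>) * surv P N n b \<le> surv P N n a" if "K \<le> n" "N0 \<le> N" for n N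
  proof -
    have "(1 - \<delta>) * surv P N n b \<le> hit_below P b N K a * surv P N n b"
      using N0[OF that(2)] K surv_nonneg[of b N n] assms by (intro mult_right_mono) auto
    also have "\<dots> \<le> surv P N n a"
      using hit_below_mult_surv_le assms that by simp
    finally show ?thesis .
  qed
  then show ?thesis
    unfolding eventually_prod_sequentially by (intro exI[of _ "max K N0"]) auto
qed

text \<open>Otherwise, by monotonicity, no state \<open>\<ge> x\<close> could ever step into \<open>{1..x}\<close>.\<close>
lemma sum_P_atMost_self_pos:
  assumes "irreducible_kernel P" "1 \<le> x"
  shows "0 < (\<Sum>z\<in>{1..x}. P x z)"
proof (rule ccontr)
  assume not_pos: "\<not> ?thesis"
  have zero: "P x' z = 0" if "x \<le> x'" "1 \<le> z" "z \<le> x" for x' z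
  proof -
    have "P x' z \<le> (\<Sum>z\<in>{1..x}. P x' z)"
      using that assms P_nonneg by (intro member_le_sum) auto
    also have "\<dots> \<le> (\<Sum>z\<in>{1..x}. P x z)"
      using P_mono that assms by simp
    finally show ?thesis
      using not_pos P_nonneg[of x' z] that assms by linarith
  qed
  have "x < 1"
  proof (rule irreducible_invariant[OF assms(1), of "\<lambda>w. x < w" "Suc x"])
    fix v w
    assume "1 \<le> v" "1 \<le> w" "0 < P v w" "x < v"
    then show "x < w"
      using zero[of v w] by fastforce
  qed (use assms in auto)
  with assms show False by simp
qed

lemma surv_pos:
  assumes "irreducible_kernel P" "1 \<le> y" "y < N"
  shows "0 < surv P N n y"
proof -
  define p where "p = (\<Sum>z\<in>{1..<N}. P (N - 1) z)"
  have "{1..<N} = {1..N - 1}" by auto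
  then have p: "0 < p"
    unfolding p_def using sum_P_atMost_self_pos[OF assms(1), of "N - 1"] assms by simp
  have "p ^ n \<le> surv P N n (N - 1)"
  proof (induction n)
    case 0
    then show ?case using assms by simp
  next
    case (Suc n)
    have "p ^ Suc n \<le> p * surv P N n (N - 1)"
      using Suc p by simp
    also have "\<dots> = (\<Sum>z\<in>{1..<N}. P (N - 1) z * surv P N n (N - 1))"
      by (simp add: p_def sum_distrib_right)
    also have "\<dots> \<le> (\<Sum>z\<in>{1..<N}. P (N - 1) z * surv P N n z)"
      using assms by (intro sum_mono mult_left_mono surv_antimono P_nonneg) auto
    also have "\<dots> = surv P N (Suc n) (N - 1)"
      using assms by simp
    finally show ?case .
  qed
  moreover have "surv P N n (N - 1) \<le> surv P N n y"
    using assms by (intro surv_antimono) auto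
  ultimately show ?thesis
    using p by (meson order_less_le_trans zero_less_power)
qed

lemma eventually_surv_pos:
  assumes "irreducible_kernel P" "1 \<le> y"
  shows "\<forall>\<^sub>F (n, N) in sequentially \<times>\<^sub>F sequentially. 0 < surv P N n y"
  unfolding eventually_prod_sequentially
  using surv_pos[OF assms] by (intro exI[of _ "Suc y"]) auto

end

locale stoch_kernel_stationary = stoch_kernel +
  fixes \<pi> :: "nat \<Rightarrow> real"
  assumes \<pi>_pos: "\<And>i. 1 \<le> i \<Longrightarrow> 0 < \<pi> i"
    and \<pi>_has_sum: "(\<pi> has_sum 1) {1..}"
    and \<pi>_stationary: "\<And>j. 1 \<le> j \<Longrightarrow> ((\<lambda>i. \<pi> i * P i j) has_sum \<pi> j) {1..}"
begin

lemma \<pi>_mult_summable: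
  assumes f: "\<And>w. 1 \<le> w \<Longrightarrow> 0 \<le> f w \<and> f w \<le> 1"
  shows "(\<lambda>w. \<pi> w * f w) summable_on {1..}"
  by (rule summable_on_comparison_test[OF has_sum_imp_summable[OF \<pi>_has_sum]])
     (use f \<pi>_pos in \<open>auto intro: mult_left_le mult_nonneg_nonneg less_imp_le\<close>)

lemma infsum_\<pi>_mult_bounds:
  assumes f: "\<And>w. 1 \<le> w \<Longrightarrow> 0 \<le> f w \<and> f w \<le> 1"
  shows "0 \<le> (\<Sum>\<^sub>\<infinity>w\<in>{1..}. \<pi> w * f w) \<and> (\<Sum>\<^sub>\<infinity>w\<in>{1..}. \<pi> w * f w) \<le> 1"
proof
  show "0 \<le> (\<Sum>\<^sub>\<infinity>w\<in>{1..}. \<pi> w * f w)"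
    using f \<pi>_pos by (intro infsum_nonneg) (auto intro: mult_nonneg_nonneg less_imp_le)
  have "(\<Sum>\<^sub>\<infinity>w\<in>{1..}. \<pi> w * f w) \<le> (\<Sum>\<^sub>\<infinity>w\<in>{1..}. \<pi> w)"
    using f \<pi>_pos \<pi>_mult_summable[OF f] has_sum_imp_summable[OF \<pi>_has_sum]
    by (intro infsum_mono) (auto intro: mult_left_le less_imp_le)
  also have "\<dots> = 1"
    using \<pi>_has_sum by (rule infsumI)
  finally show "(\<Sum>\<^sub>\<infinity>w\<in>{1..}. \<pi> w * f w) \<le> 1" .
qed

lemma infsum_\<pi>_kernel_apply_le:
  assumes f: "\<And>w. 1 \<le> w \<Longrightarrow> 0 \<le> f w \<and> f w \<le> 1"
  shows "(\<Sum>\<^sub>\<infinity>x\<in>{1..}. \<pi> x * kernel_apply P f x) \<le> (\<Sum>\<^sub>\<infinity>w\<in>{1..}. \<pi> w * f w)"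
proof (rule infsum_le_finite_sums)
  show "(\<lambda>x. \<pi> x * kernel_apply P f x) summable_on {1..}"
    using \<pi>_mult_summable[of "kernel_apply P f"] kernel_apply_bounds f by blast
next
  fix X :: "nat set"
  assume X: "finite X" "X \<subseteq> {1..}"
  have "((\<lambda>w. \<Sum>x\<in>X. \<pi> x * (P x w * f w)) has_sum (\<Sum>x\<in>X. \<pi> x * kernel_apply P f x)) {1..}"
    unfolding kernel_apply_def using X f
    by (intro has_sum_sum_fun has_sum_cmult_right has_sum_infsum kernel_apply_summable) auto
  moreover have "((\<lambda>w. \<pi> w * f w) has_sum (\<Sum>\<^sub>\<infinity>w\<in>{1..}. \<pi> w * f w)) {1..}"
    using \<pi>_mult_summable[OF f] by simp
  moreover have "(\<Sum>x\<in>X. \<pi> x * (P x w * f w)) \<le> \<pi> w * f w" if "w \<in> {1..}" for w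
  proof -
    have "(\<Sum>x\<in>X. \<pi> x * P x w) \<le> \<pi> w"
      using that X \<pi>_pos P_nonneg
      by (intro finite_sum_le_has_sum[OF \<pi>_stationary]) (auto intro!: mult_nonneg_nonneg intro: less_imp_le)
    moreover have "(\<Sum>x\<in>X. \<pi> x * (P x w * f w)) = (\<Sum>x\<in>X. \<pi> x * P x w) * f w"
      by (simp add: sum_distrib_right mult.assoc)
    ultimately show ?thesis
      using f that by (simp add: mult_right_mono)
  qed
  ultimately show "(\<Sum>x\<in>X. \<pi> x * kernel_apply P f x) \<le> (\<Sum>\<^sub>\<infinity>w\<in>{1..}. \<pi> w * f w)"
    by (rule has_sum_mono)
qed

lemma avoid_below_decrement:
  "(\<Sum>x\<in>{1..b}. \<pi> x * kernel_apply P (avoid_below P b k) x)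
     + (\<Sum>\<^sub>\<infinity>x\<in>{1..}. \<pi> x * avoid_below P b (Suc k) x)
   \<le> (\<Sum>\<^sub>\<infinity>x\<in>{1..}. \<pi> x * avoid_below P b k x)"
proof -
  define h where "h x = \<pi> x * kernel_apply P (avoid_below P b k) x" for x
  have "h summable_on {1..}"
    unfolding h_def using \<pi>_mult_summable kernel_apply_avoid_below_bounds by blast
  then have "h summable_on {Suc b..}"
    by (rule summable_on_subset) auto
  moreover have "{1..} = {1..b} \<union> {Suc b..}"
    by auto
  ultimately have "(\<Sum>\<^sub>\<infinity>x\<in>{1..}. h x) = (\<Sum>x\<in>{1..b}. h x) + (\<Sum>\<^sub>\<infinity>x\<in>{Suc b..}. h x)"
    using infsum_Un_disjoint[of h "{1..b}" "{Suc b..}"] by simp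
  moreover have "(\<Sum>\<^sub>\<infinity>x\<in>{1..}. \<pi> x * avoid_below P b (Suc k) x) = (\<Sum>\<^sub>\<infinity>x\<in>{Suc b..}. h x)"
    by (rule infsum_cong_neutral) (auto simp: h_def)
  moreover have "(\<Sum>\<^sub>\<infinity>x\<in>{1..}. h x) \<le> (\<Sum>\<^sub>\<infinity>x\<in>{1..}. \<pi> x * avoid_below P b k x)"
    unfolding h_def using avoid_below_bounds by (intro infsum_\<pi>_kernel_apply_le) auto
  ultimately show ?thesis
    unfolding h_def by linarith
qed

lemma summable_avoid_below_decrement:
  "summable (\<lambda>k. \<Sum>x\<in>{1..b}. \<pi> x * kernel_apply P (avoid_below P b k) x)"
proof (rule summableI_nonneg_bounded)
  define A where "A k = (\<Sum>\<^sub>\<infinity>x\<in>{1..}. \<pi> x * avoid_below P b k x)" for k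
  show "0 \<le> (\<Sum>x\<in>{1..b}. \<pi> x * kernel_apply P (avoid_below P b k) x)" for k
    using \<pi>_pos kernel_apply_avoid_below_bounds
    by (intro sum_nonneg mult_nonneg_nonneg) (auto intro: less_imp_le)
  have telescope: "(\<Sum>k<n. \<Sum>x\<in>{1..b}. \<pi> x * kernel_apply P (avoid_below P b k) x) \<le> A 0 - A n" for n
  proof (induction n)
    case (Suc n)
    then show ?case using avoid_below_decrement[of b n] by (simp add: A_def)
  qed simp
  have A_bounds: "0 \<le> A k \<and> A k \<le> 1" for k
    unfolding A_def using infsum_\<pi>_mult_bounds avoid_below_bounds by blast
  show "(\<Sum>k<n. \<Sum>x\<in>{1..b}. \<pi> x * kernel_apply P (avoid_below P b k) x) \<le> 1" for n
    using telescope[of n] A_bounds[of 0] A_bounds[of n] by linarith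
qed

lemma kernel_apply_avoid_below_tendsto_zero:
  assumes "x \<in> {1..b}"
  shows "(\<lambda>k. kernel_apply P (avoid_below P b k) x) \<longlonglongrightarrow> 0"
proof -
  define d where "d k = (\<Sum>x\<in>{1..b}. \<pi> x * kernel_apply P (avoid_below P b k) x)" for k
  have "0 < \<pi> x"
    using assms \<pi>_pos by simp
  have nonneg: "0 \<le> kernel_apply P (avoid_below P b k) y" if "1 \<le> y" for k y
    using kernel_apply_avoid_below_bounds[OF that] by blast
  have weighted: "kernel_apply P (avoid_below P b k) x * \<pi> x \<le> d k" for k
    unfolding d_def mult.commute[of _ "\<pi> x"] using assms
  proof (intro member_le_sum)
    fix y
    assume "y \<in> {1..b} - {x}"
    then show "0 \<le> \<pi> y * kernel_apply P (avoid_below P b k) y"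
      using \<pi>_pos[of y] nonneg[of y k] by simp
  qed auto
  then have "kernel_apply P (avoid_below P b k) x \<le> d k / \<pi> x" for k
    by (simp add: pos_le_divide_eq[OF \<open>0 < \<pi> x\<close>])
  then have upper: "\<forall>\<^sub>F k in sequentially. kernel_apply P (avoid_below P b k) x \<le> d k / \<pi> x"
    by simp
  have lower: "\<forall>\<^sub>F k in sequentially. 0 \<le> kernel_apply P (avoid_below P b k) x"
    using assms nonneg by simp
  have "(\<lambda>k. d k / \<pi> x) \<longlonglongrightarrow> 0"
    using tendsto_divide_zero[OF summable_LIMSEQ_zero[OF summable_avoid_below_decrement]]
    unfolding d_def .
  then show ?thesis
    by (rule tendsto_sandwich[OF lower upper tendsto_const])
qed

lemma avoid_below_tendsto_zero:
  assumes "irreducible_kernel P" "1 \<le> b" "1 \<le> a"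
  shows "(\<lambda>k. avoid_below P b k a) \<longlonglongrightarrow> 0"
proof -
  define Q where "Q x \<longleftrightarrow> (\<lambda>k. kernel_apply P (avoid_below P b k) x) \<longlonglongrightarrow> 0" for x
  have Q_step: "Q w" if "1 \<le> x" "1 \<le> w" "0 < P x w" "Q x" for x w
  proof (cases "w \<le> b")
    case True
    then show ?thesis
      using kernel_apply_avoid_below_tendsto_zero[of w b] that unfolding Q_def by simp
  next
    case False
    have "(\<lambda>k. avoid_below P b (Suc k) w) \<longlonglongrightarrow> 0"
      using avoid_below_tendsto_zero_of_edge[OF that(1-3) that(4)[unfolded Q_def]] by (rule LIMSEQ_Suc)
    then show ?thesis
      unfolding Q_def using False by simp
  qed
  have "Q 1"
    using kernel_apply_avoid_below_tendsto_zero[of 1 b] assms unfolding Q_def by simp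
  then have "Q a"
    using irreducible_invariant[OF assms(1), of Q 1 a] Q_step assms by blast
  then have "(\<lambda>k. avoid_below P b (Suc k) a) \<longlonglongrightarrow> 0"
    unfolding Q_def by (cases "a \<le> b") simp_all
  then show ?thesis
    by (rule LIMSEQ_imp_Suc)
qed

end

locale monotone_stationary_kernel =
  monotone_stoch_kernel P + stoch_kernel_stationary P \<pi>
  for P :: "nat \<Rightarrow> nat \<Rightarrow> real" and \<pi> :: "nat \<Rightarrow> real" +
  assumes irreducible: "irreducible_kernel P"
begin

lemma surv_ratio_tendsto_1_of_less:
  assumes "1 \<le> b" "b < a"
  shows "((\<lambda>(n, N). surv P N n a / surv P N n b) \<longlongrightarrow> 1) (sequentially \<times>\<^sub>F sequentially)"
proof (rule tendstoI)
  fix e :: real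
  assume "0 < e"
  then have "\<forall>\<^sub>F (n, N) in sequentially \<times>\<^sub>F sequentially. (1 - e/2) * surv P N n b \<le> surv P N n a"
    using assms avoid_below_tendsto_zero[OF irreducible, of b a]
    by (intro surv_ge_of_avoid_below_tendsto_zero) auto
  moreover have "\<forall>\<^sub>F (n, N) in sequentially \<times>\<^sub>F sequentially. 0 < surv P N n b"
    using eventually_surv_pos[OF irreducible assms(1)] .
  ultimately show "\<forall>\<^sub>F p in sequentially \<times>\<^sub>F sequentially.
      dist ((\<lambda>(n, N). surv P N n a / surv P N n b) p) 1 < e"
  proof eventually_elim
    case (elim p)
    obtain n N where p: "p = (n, N)" by fastforce
    have pos: "0 < surv P N n b" and lower: "(1 - e/2) * surv P N n b \<le> surv P N n a"
      using elim by (simp_all add: p)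
    have "surv P N n a \<le> surv P N n b"
      using assms surv_antimono by simp
    with pos lower have "1 - e/2 \<le> surv P N n a / surv P N n b" "surv P N n a / surv P N n b \<le> 1"
      by (simp_all add: pos_le_divide_eq)
    then show ?case
      using \<open>0 < e\<close> by (simp add: p dist_real_def abs_le_iff)
  qed
qed

lemma surv_ratio_tendsto_1:
  assumes "1 \<le> y" "1 \<le> z"
  shows "((\<lambda>(n, N). surv P N n y / surv P N n z) \<longlongrightarrow> 1) (sequentially \<times>\<^sub>F sequentially)"
proof (cases y z rule: linorder_cases)
  case less
  have "((\<lambda>p. inverse ((\<lambda>(n, N). surv P N n z / surv P N n y) p)) \<longlongrightarrow> inverse 1)
      (sequentially \<times>\<^sub>F sequentially)"
    using surv_ratio_tendsto_1_of_less[OF assms(1) less] by (rule tendsto_inverse) simp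
  then show ?thesis
    by (simp add: case_prod_unfold)
next
  case equal
  show ?thesis
    by (rule tendsto_eventually)
       (use eventually_surv_pos[OF irreducible assms(1)] equal in \<open>auto elim!: eventually_mono\<close>)
next
  case greater
  then show ?thesis
    using surv_ratio_tendsto_1_of_less assms by blast
qed

end

theorem lemma2:
  fixes P :: "nat \<Rightarrow> nat \<Rightarrow> real" and \<pi> :: "nat \<Rightarrow> real"
  assumes "stochastic_kernel P"
    and "monotone_kernel P"
    and "irreducible_kernel P"
    and "positive_recurrent P"
    and "stationary_distribution P \<pi>"
  shows "\<forall>y\<ge>1. \<forall>z\<ge>1.
           ((\<lambda>(n, N). surv P N n y / surv P N n z) \<longlongrightarrow> 1) (at_top \<times>\<^sub>F at_top)"
proof -
  interpret monotone_stationary_kernel P \<pi>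
    using assms(1,2,3,5)
    unfolding stochastic_kernel_def monotone_kernel_def stationary_distribution_def
    by unfold_locales auto
  show ?thesis
    using surv_ratio_tendsto_1 by blast
qed

end
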